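(* Let $(\mathcal A,\lambda_0,S_0)$ be a substitution datum over a dilation datum $(G,d,(D_\lambda)_{\lambda>0},\Gamma,V)$, $D:=D_{\lambda_0}$. Then there is a unique map $S:\mathcal A^{**}_\Gamma\to\mathcal A^{**}_\Gamma$ satisfying: (E1) $S(P_a)=S_0(a)$ for all $a\in\mathcal A$; (E2) for all $\gamma\in\Gamma$ and $P\in\mathcal A^{**}_\Gamma$: $\mathrm{supp}(S(\gamma P))=D(\gamma)\,\mathrm{supp}(S(P))$ and $S(\gamma P)=D(\gamma)S(P)$; (E3) if $(M_i)_{i\in I}$ are subsets of $\Gamma$ with $M=\bigcup_iM_i$ and $P\in\mathcal A^M$, then $\mathrm{supp}(S(P))=\bigcup_i\mathrm{supp}(S(P|_{M_i}))$ and $S(P)(\gamma)=S(P|_{M_i})(\gamma)$ for all $i$ and all $\gamma\in\mathrm{supp}(S(P|_{M_i}))$. This map is the substitution map of Construction below, it satisfies $S^n(\gamma P)=D^n(\gamma)S^n(P)$ for all $P$, $\gamma\in\Gamma$, $n\in\mathbb N$, it maps $\mathcal A^\Gamma$ into $\mathcal A^\Gamma$, and its restriction $S:\mathcal A^\Gamma\to\mathcal A^\Gamma$ is continuous for the product topology.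
   Context: Dilation datum $(G,d,(D_\lambda),\Gamma,V)$: $G$ connected lcsc group, $d$ left-invariant metric inducing the topology, $\lambda\mapsto D_\lambda$ homomorphism $(\mathbb R_{>0},\cdot)\to\mathrm{Aut}(G)$ with $d(D_\lambda g,D_\lambda h)=\lambda d(g,h)$; $\Gamma$ uniform lattice with $D_\lambda(\Gamma)\subset\Gamma$ for some $\lambda>1$; $V$ bounded Borel set containing an open identity neighbourhood with $G=\bigsqcup_{\gamma\in\Gamma}\gamma V$. Substitution datum $(\mathcal A,\lambda_0,S_0)$: finite $\mathcal A$; $\lambda_0>1+r_+/r_-$ for some $0<r_-<r_+$ with $B(e,r_-)\subset V\subset B(e,r_+)$; $D_{\lambda_0}(\Gamma)\subset\Gamma$; $S_0:\mathcal A\to\mathcal A^{D(V)\cap\Gamma}$. A patch is $P\in\mathcal A^M$ for some $M\subset\Gamma$, $\mathrm{supp}(P)=M$; $\mathcal A^{**}_\Gamma$ is the set of all patches; $P_a$ has support $\{e\}$ and value $a$; $\Gamma$ acts by $\mathrm{supp}(\gamma P)=\gamma\,\mathrm{supp}(P)$, $(\gamma P)(x)=P(\gamma^{-1}x)$; $P|_M$ is the restriction to $\mathrm{supp}(P)\cap M$. Construction: for $P$ with support $M$, $\mathrm{supp}(S(P))=D(MV)\cap\Gamma$, and for $\gamma$ in it, with the unique $\eta\in M$ such that $\gamma\in D(\eta)(D(V)\cap\Gamma)$, $S(P)(\gamma):=S_0(P(\eta))(D(\eta)^{-1}\gamma)$. *)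

theory Defs
  imports "HOL-Analysis.Analysis"
begin

text \<open>The group G is a type 'g of class group_add (NOT assumed commutative), written
additively: x + y is the group product, 0 the identity e, -x the inverse.
A patch is a partial map 'g \<Rightarrow> 'a option; its support is its domain.\<close>

definition topological_group :: "'g::{metric_space,group_add} itself \<Rightarrow> bool" where
  "topological_group _ \<longleftrightarrow>
     continuous_on UNIV (\<lambda>p::'g \<times> 'g. fst p + snd p) \<and> continuous_on UNIV (uminus :: 'g \<Rightarrow> 'g)"

definition uniform_lattice :: "'g::{metric_space,group_add} set \<Rightarrow> bool" where
  "uniform_lattice \<Gamma> \<longleftrightarrow>
     0 \<in> \<Gamma> \<and> (\<forall>x\<in>\<Gamma>. \<forall>y\<in>\<Gamma>. x + y \<in> \<Gamma>) \<and> (\<forall>x\<in>\<Gamma>. - x \<in> \<Gamma>) \<and>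
     (\<forall>\<gamma>\<in>\<Gamma>. \<exists>e>0. \<Gamma> \<inter> ball \<gamma> e = {\<gamma>}) \<and>
     (\<exists>K. compact K \<and> (\<Union>\<gamma>\<in>\<Gamma>. (+) \<gamma> ` K) = UNIV)"

definition dilation_datum ::
  "(real \<Rightarrow> 'g::{metric_space,group_add} \<Rightarrow> 'g) \<Rightarrow> 'g set \<Rightarrow> 'g set \<Rightarrow> bool" where
  "dilation_datum D \<Gamma> V \<longleftrightarrow>
     \<comment> \<open>G connected lcsc group, metric left-invariant (topology is the metric topology)\<close>
     topological_group TYPE('g) \<and>
     connected (UNIV :: 'g set) \<and>
     locally_compact_space (euclidean :: 'g topology) \<and>
     second_countable (euclidean :: 'g topology) \<and>
     (\<forall>g x y :: 'g. dist (g + x) (g + y) = dist x y) \<and>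
     \<comment> \<open>l \<mapsto> D l is a homomorphism (R_{>0},*) \<rightarrow> Aut(G), scaling the metric\<close>
     (\<forall>l>0. bij (D l) \<and> (\<forall>x y. D l (x + y) = D l x + D l y)
            \<and> continuous_on UNIV (D l) \<and> continuous_on UNIV (inv (D l))) \<and>
     D 1 = id \<and>
     (\<forall>l>0. \<forall>m>0. D (l * m) = D l \<circ> D m) \<and>
     (\<forall>l>0. \<forall>g h. dist (D l g) (D l h) = l * dist g h) \<and>
     \<comment> \<open>uniform lattice, invariant under some expanding dilation\<close>
     uniform_lattice \<Gamma> \<and>
     (\<exists>l>1. D l ` \<Gamma> \<subseteq> \<Gamma>) \<and>
     \<comment> \<open>V bounded Borel, contains an open identity neighbourhood, G = disjoint union of \<gamma> V\<close>
     bounded V \<and> V \<in> sets borel \<and>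
     (\<exists>U. open U \<and> 0 \<in> U \<and> U \<subseteq> V) \<and>
     (\<forall>g. \<exists>!\<gamma>. \<gamma> \<in> \<Gamma> \<and> g \<in> (+) \<gamma> ` V)"

definition patches :: "'a set \<Rightarrow> 'g set \<Rightarrow> ('g \<Rightarrow> 'a option) set" where
  "patches A \<Gamma> = {P. dom P \<subseteq> \<Gamma> \<and> ran P \<subseteq> A}"

definition patches_on :: "'a set \<Rightarrow> 'g set \<Rightarrow> ('g \<Rightarrow> 'a option) set" where
  "patches_on A M = {P. dom P = M \<and> ran P \<subseteq> A}"

definition single_patch :: "'a \<Rightarrow> 'g::group_add \<Rightarrow> 'a option" where
  "single_patch a = [0 \<mapsto> a]"

definition act :: "'g::group_add \<Rightarrow> ('g \<Rightarrow> 'a option) \<Rightarrow> ('g \<Rightarrow> 'a option)" where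
  "act \<gamma> P = (\<lambda>x. P (- \<gamma> + x))"

definition substitution_datum ::
  "(real \<Rightarrow> 'g::{metric_space,group_add} \<Rightarrow> 'g) \<Rightarrow> 'g set \<Rightarrow> 'g set \<Rightarrow>
   'a set \<Rightarrow> real \<Rightarrow> ('a \<Rightarrow> 'g \<Rightarrow> 'a option) \<Rightarrow> bool" where
  "substitution_datum D \<Gamma> V A l0 S0 \<longleftrightarrow>
     dilation_datum D \<Gamma> V \<and> finite A \<and>
     (\<exists>rm rp. 0 < rm \<and> rm < rp \<and> ball 0 rm \<subseteq> V \<and> V \<subseteq> ball 0 rp \<and> l0 > 1 + rp / rm) \<and>
     D l0 ` \<Gamma> \<subseteq> \<Gamma> \<and>
     (\<forall>a\<in>A. S0 a \<in> patches_on A (D l0 ` V \<inter> \<Gamma>))"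

definition construction ::
  "(real \<Rightarrow> 'g::{metric_space,group_add} \<Rightarrow> 'g) \<Rightarrow> 'g set \<Rightarrow> 'g set \<Rightarrow> real \<Rightarrow>
   ('a \<Rightarrow> 'g \<Rightarrow> 'a option) \<Rightarrow> ('g \<Rightarrow> 'a option) \<Rightarrow> ('g \<Rightarrow> 'a option)" where
  "construction D \<Gamma> V l0 S0 P = (\<lambda>\<gamma>.
     if \<gamma> \<in> D l0 ` (\<Union>\<eta>\<in>dom P. (+) \<eta> ` V) \<inter> \<Gamma> then
       (let \<eta> = (THE \<eta>. \<eta> \<in> dom P \<and> \<gamma> \<in> (+) (D l0 \<eta>) ` (D l0 ` V \<inter> \<Gamma>))
        in S0 (the (P \<eta>)) (- (D l0 \<eta>) + \<gamma>))
     else None)"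

text \<open>Identification of A^\<Gamma> (patches with support \<Gamma>) with the product space
  PiE \<Gamma> (\<lambda>_. A) carrying the product of discrete topologies.\<close>
definition cfg_of :: "'g set \<Rightarrow> ('g \<Rightarrow> 'a) \<Rightarrow> ('g \<Rightarrow> 'a option)" where
  "cfg_of \<Gamma> x = (\<lambda>\<eta>. if \<eta> \<in> \<Gamma> then Some (x \<eta>) else None)"

definition pts_of :: "'g set \<Rightarrow> ('g \<Rightarrow> 'a option) \<Rightarrow> ('g \<Rightarrow> 'a)" where
  "pts_of \<Gamma> P = restrict (\<lambda>\<eta>. the (P \<eta>)) \<Gamma>"

definition config_topology :: "'a set \<Rightarrow> 'g set \<Rightarrow> ('g \<Rightarrow> 'a) topology" where
  "config_topology A \<Gamma> = product_topology (\<lambda>_. discrete_topology A) \<Gamma>"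

definition subst_props ::
  "(real \<Rightarrow> 'g::{metric_space,group_add} \<Rightarrow> 'g) \<Rightarrow> 'g set \<Rightarrow> 'a set \<Rightarrow> real \<Rightarrow>
   ('a \<Rightarrow> 'g \<Rightarrow> 'a option) \<Rightarrow> (('g \<Rightarrow> 'a option) \<Rightarrow> ('g \<Rightarrow> 'a option)) \<Rightarrow> bool" where
  "subst_props D \<Gamma> A l0 S0 S \<longleftrightarrow>
     (\<forall>P\<in>patches A \<Gamma>. S P \<in> patches A \<Gamma>) \<and>
     \<comment> \<open>(E1)\<close>
     (\<forall>a\<in>A. S (single_patch a) = S0 a) \<and>
     \<comment> \<open>(E2)\<close>
     (\<forall>\<gamma>\<in>\<Gamma>. \<forall>P\<in>patches A \<Gamma>.
        dom (S (act \<gamma> P)) = (+) (D l0 \<gamma>) ` dom (S P) \<and>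
        S (act \<gamma> P) = act (D l0 \<gamma>) (S P)) \<and>
     \<comment> \<open>(E3): family (M_i) rendered as a set Ms of subsets of \<Gamma>\<close>
     (\<forall>Ms. (\<forall>M\<in>Ms. M \<subseteq> \<Gamma>) \<longrightarrow>
        (\<forall>P\<in>patches_on A (\<Union>Ms).
           dom (S P) = (\<Union>M\<in>Ms. dom (S (P |` M))) \<and>
           (\<forall>M\<in>Ms. \<forall>\<gamma>\<in>dom (S (P |` M)). S P \<gamma> = S (P |` M) \<gamma>)))"

end

theory Submission
  imports Defs
begin

text \<open>Since D is an automorphism mapping \<Gamma> into \<Gamma> and the translates \<gamma> + V tile G, the supertiles
  D \<eta> + (D V \<inter> \<Gamma>), \<eta> \<in> \<Gamma>, partition \<Gamma>. So the Construction is well defined, and it is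
  \<Gamma>-equivariant and local because it is computed supertile by supertile. Conversely, (E3) applied
  to the one-point restrictions of P reduces any map with (E1)--(E3) to its values on translates
  of single-letter patches, which (E1) and (E2) fix. Continuity holds because each output letter
  depends on a single input letter.\<close>

lemma dom_act: "dom (act g P) = (+) g ` dom P"
proof (intro set_eqI iffI)
  fix x assume "x \<in> dom (act g P)"
  then have "- g + x \<in> dom P" by (simp add: act_def domIff)
  then show "x \<in> (+) g ` dom P" by (rule rev_image_eqI) simp
qed (auto simp: act_def)

lemma act_add_apply [simp]: "act g P (g + x) = P x"
  by (simp add: act_def)

lemma act_single_patch: "act \<eta> (single_patch a) = [\<eta> \<mapsto> a]"
  by (auto simp: act_def single_patch_def add_eq_0_iff)

lemma patches_restrict_map: "P \<in> patches A \<Gamma> \<Longrightarrow> P |` M \<in> patches A \<Gamma>"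
  by (auto simp: patches_def ran_def restrict_map_def split: if_splits)

lemma patches_on_imp_patches: "P \<in> patches_on A M \<Longrightarrow> M \<subseteq> \<Gamma> \<Longrightarrow> P \<in> patches A \<Gamma>"
  by (simp add: patches_on_def patches_def)

locale substitution_rule =
  fixes D :: "'g::group_add \<Rightarrow> 'g" and \<Gamma> V :: "'g set" and A :: "'a set"
    and S0 :: "'a \<Rightarrow> 'g \<Rightarrow> 'a option"
  assumes D_add: "\<And>x y. D (x + y) = D x + D y"
    and D_bij: "bij D"
    and D_lattice: "D ` \<Gamma> \<subseteq> \<Gamma>"
    and lattice_zero: "0 \<in> \<Gamma>"
    and lattice_add: "\<And>x y. x \<in> \<Gamma> \<Longrightarrow> y \<in> \<Gamma> \<Longrightarrow> x + y \<in> \<Gamma>"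
    and lattice_minus: "\<And>x. x \<in> \<Gamma> \<Longrightarrow> - x \<in> \<Gamma>"
    and tiling: "\<And>g. \<exists>!\<gamma>. \<gamma> \<in> \<Gamma> \<and> g \<in> (+) \<gamma> ` V"
    and S0_patch: "\<And>a. a \<in> A \<Longrightarrow> S0 a \<in> patches_on A (D ` V \<inter> \<Gamma>)"
begin

definition subst :: "('g \<Rightarrow> 'a option) \<Rightarrow> 'g \<Rightarrow> 'a option" where
  "subst P = (\<lambda>\<gamma>.
     if \<gamma> \<in> D ` (\<Union>\<eta>\<in>dom P. (+) \<eta> ` V) \<inter> \<Gamma> then
       (let \<eta> = (THE \<eta>. \<eta> \<in> dom P \<and> \<gamma> \<in> (+) (D \<eta>) ` (D ` V \<inter> \<Gamma>))
        in S0 (the (P \<eta>)) (- (D \<eta>) + \<gamma>))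
     else None)"

definition supertile :: "'g \<Rightarrow> 'g set" where
  "supertile \<eta> = (+) (D \<eta>) ` (D ` V \<inter> \<Gamma>)"

lemma D_zero: "D 0 = 0"
proof -
  have "D 0 + D 0 = D 0 + 0" using D_add[of 0 0] by simp
  then show ?thesis by (rule add_left_imp_eq)
qed

lemma lattice_diff: "x \<in> \<Gamma> \<Longrightarrow> y \<in> \<Gamma> \<Longrightarrow> - x + y \<in> \<Gamma>"
  by (simp add: lattice_add lattice_minus)

lemma supertile_add: "supertile (\<gamma> + \<eta>) = (+) (D \<gamma>) ` supertile \<eta>"
  by (simp add: supertile_def D_add image_image add.assoc)

lemma supertile_zero: "supertile 0 = D ` V \<inter> \<Gamma>"
  by (simp add: supertile_def D_zero)

lemma supertile_subset: "\<eta> \<in> \<Gamma> \<Longrightarrow> supertile \<eta> \<subseteq> \<Gamma>"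
  using D_lattice by (auto simp: supertile_def intro: lattice_add)

lemma supertile_unique:
  assumes "\<eta>1 \<in> \<Gamma>" "\<eta>2 \<in> \<Gamma>" "x \<in> supertile \<eta>1" "x \<in> supertile \<eta>2"
  shows "\<eta>1 = \<eta>2"
proof -
  obtain v1 v2 where v: "v1 \<in> V" "v2 \<in> V" "x = D \<eta>1 + D v1" "x = D \<eta>2 + D v2"
    using assms(3,4) by (auto simp: supertile_def)
  then have "D (\<eta>1 + v1) = D (\<eta>2 + v2)" by (simp add: D_add)
  then have eq: "\<eta>1 + v1 = \<eta>2 + v2" using bij_is_inj[OF D_bij] by (simp add: inj_eq)
  have "\<eta>1 + v1 \<in> (+) \<eta>1 ` V" using v(1) by (rule imageI)
  moreover have "\<eta>1 + v1 \<in> (+) \<eta>2 ` V" unfolding eq using v(2) by (rule imageI)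
  ultimately show ?thesis using tiling[of "\<eta>1 + v1"] assms(1,2) by (elim ex1E) blast
qed

lemma supertile_cover:
  assumes "k \<in> \<Gamma>" shows "\<exists>\<eta>\<in>\<Gamma>. k \<in> supertile \<eta>"
proof -
  obtain y where y: "k = D y" using bij_is_surj[OF D_bij] by (metis surjD)
  obtain \<eta> v where \<eta>: "\<eta> \<in> \<Gamma>" "v \<in> V" "y = \<eta> + v" using tiling[of y] by blast
  have k: "k = D \<eta> + D v" using y \<eta>(3) by (simp add: D_add)
  have "D v = - D \<eta> + k" using k by (simp add: add.assoc[symmetric])
  also have "\<dots> \<in> \<Gamma>" using \<eta>(1) D_lattice assms by (auto intro: lattice_diff)
  finally have "k \<in> supertile \<eta>" using k \<eta>(2) by (auto simp: supertile_def)
  with \<eta>(1) show ?thesis ..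
qed

lemma subst_domain_iff:
  assumes "dom P \<subseteq> \<Gamma>"
  shows "\<gamma> \<in> D ` (\<Union>\<eta>\<in>dom P. (+) \<eta> ` V) \<inter> \<Gamma> \<longleftrightarrow> (\<exists>\<eta>\<in>dom P. \<gamma> \<in> supertile \<eta>)"
proof
  assume "\<gamma> \<in> D ` (\<Union>\<eta>\<in>dom P. (+) \<eta> ` V) \<inter> \<Gamma>"
  then obtain \<eta> v where h: "\<eta> \<in> dom P" "v \<in> V" "\<gamma> = D (\<eta> + v)" "\<gamma> \<in> \<Gamma>"
    by auto
  then have "\<gamma> = D \<eta> + D v" by (simp add: D_add)
  then have "D v = - D \<eta> + \<gamma>" by (simp add: add.assoc[symmetric])
  also have "\<dots> \<in> \<Gamma>" using h assms D_lattice by (auto intro: lattice_diff)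
  finally show "\<exists>\<eta>\<in>dom P. \<gamma> \<in> supertile \<eta>"
    using h(1,2) \<open>\<gamma> = D \<eta> + D v\<close> unfolding supertile_def by blast
next
  assume "\<exists>\<eta>\<in>dom P. \<gamma> \<in> supertile \<eta>"
  then obtain \<eta> v where h: "\<eta> \<in> dom P" "v \<in> V" "\<gamma> \<in> supertile \<eta>" "\<gamma> = D (\<eta> + v)"
    by (auto simp: supertile_def D_add)
  then have "\<gamma> \<in> \<Gamma>" using assms supertile_subset by blast
  with h show "\<gamma> \<in> D ` (\<Union>\<eta>\<in>dom P. (+) \<eta> ` V) \<inter> \<Gamma>" by auto
qed

lemma subst_eq:
  assumes "dom P \<subseteq> \<Gamma>"
  shows "subst P \<gamma> =
    (if \<exists>\<eta>\<in>dom P. \<gamma> \<in> supertile \<eta> then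
       (let \<eta> = (THE \<eta>. \<eta> \<in> dom P \<and> \<gamma> \<in> supertile \<eta>) in S0 (the (P \<eta>)) (- (D \<eta>) + \<gamma>))
     else None)"
  by (simp only: subst_def supertile_def[symmetric] subst_domain_iff[OF assms])

lemma subst_apply:
  assumes "dom P \<subseteq> \<Gamma>" "\<eta> \<in> dom P" "\<delta> \<in> D ` V \<inter> \<Gamma>"
  shows "subst P (D \<eta> + \<delta>) = S0 (the (P \<eta>)) \<delta>"
proof -
  have tile: "D \<eta> + \<delta> \<in> supertile \<eta>" using assms(3) by (simp add: supertile_def)
  have the_tile: "(THE \<eta>'. \<eta>' \<in> dom P \<and> D \<eta> + \<delta> \<in> supertile \<eta>') = \<eta>"
  proof (rule the_equality)
    show "\<eta> \<in> dom P \<and> D \<eta> + \<delta> \<in> supertile \<eta>" using assms(2) tile ..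
    fix \<eta>' assume "\<eta>' \<in> dom P \<and> D \<eta> + \<delta> \<in> supertile \<eta>'"
    then show "\<eta>' = \<eta>" using supertile_unique[of \<eta>' \<eta>] assms(1,2) tile by auto
  qed
  have "\<exists>\<eta>'\<in>dom P. D \<eta> + \<delta> \<in> supertile \<eta>'" using assms(2) tile ..
  then show ?thesis by (simp add: subst_eq[OF assms(1)] the_tile add.assoc[symmetric])
qed

lemma subst_outside:
  assumes "dom P \<subseteq> \<Gamma>" "\<not> (\<exists>\<eta>\<in>dom P. \<gamma> \<in> supertile \<eta>)"
  shows "subst P \<gamma> = None"
  using assms(2) by (simp only: subst_eq[OF assms(1)] if_False)

lemma dom_subst:
  assumes "P \<in> patches A \<Gamma>"
  shows "dom (subst P) = (\<Union>\<eta>\<in>dom P. supertile \<eta>)"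
proof (intro set_eqI iffI)
  have dom_P: "dom P \<subseteq> \<Gamma>" using assms by (simp add: patches_def)
  fix x
  show "x \<in> (\<Union>\<eta>\<in>dom P. supertile \<eta>)" if "x \<in> dom (subst P)"
  proof (rule ccontr)
    assume "x \<notin> (\<Union>\<eta>\<in>dom P. supertile \<eta>)"
    then have "subst P x = None" by (intro subst_outside[OF dom_P]) blast
    with that show False by (simp add: domIff)
  qed
  assume "x \<in> (\<Union>\<eta>\<in>dom P. supertile \<eta>)"
  then obtain \<eta> \<delta> a where h: "P \<eta> = Some a" "\<delta> \<in> D ` V \<inter> \<Gamma>" "x = D \<eta> + \<delta>"
    by (auto simp: supertile_def)
  have "a \<in> A" using h(1) assms by (auto simp: patches_def ran_def)
  then have "\<delta> \<in> dom (S0 a)" using S0_patch h(2) by (simp add: patches_on_def)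
  moreover have "subst P x = S0 a \<delta>"
    using subst_apply[OF dom_P domI[of P, OF h(1)] h(2)] h(1,3) by simp
  ultimately show "x \<in> dom (subst P)" by (simp add: domIff)
qed

lemma subst_patches:
  assumes "P \<in> patches A \<Gamma>"
  shows "subst P \<in> patches A \<Gamma>"
proof -
  have dom_P: "dom P \<subseteq> \<Gamma>" using assms by (simp add: patches_def)
  have "ran (subst P) \<subseteq> A"
  proof
    fix b assume "b \<in> ran (subst P)"
    then obtain x where x: "subst P x = Some b" by (auto simp: ran_def)
    then have "x \<in> (\<Union>\<eta>\<in>dom P. supertile \<eta>)" using dom_subst[OF assms] by blast
    then obtain \<eta> \<delta> a where h: "P \<eta> = Some a" "\<delta> \<in> D ` V \<inter> \<Gamma>" "x = D \<eta> + \<delta>"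
      by (auto simp: supertile_def)
    have "a \<in> A" using h(1) assms by (auto simp: patches_def ran_def)
    moreover have "S0 a \<delta> = Some b" using x h(1,3) subst_apply[OF dom_P domI[of P, OF h(1)] h(2)] by simp
    ultimately show "b \<in> A" using S0_patch by (auto simp: patches_on_def ran_def)
  qed
  moreover have "dom (subst P) \<subseteq> \<Gamma>" using dom_subst[OF assms] dom_P supertile_subset by blast
  ultimately show ?thesis by (simp add: patches_def)
qed

lemma subst_single_patch:
  assumes "a \<in> A" shows "subst (single_patch a) = S0 a"
proof
  fix x
  have dom_single: "dom (single_patch a) = {0::'g}" by (simp add: single_patch_def)
  then have sub: "dom (single_patch a) \<subseteq> \<Gamma>" using lattice_zero by simp
  show "subst (single_patch a) x = S0 a x"
  proof (cases "x \<in> D ` V \<inter> \<Gamma>")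
    case True
    have "(0::'g) \<in> dom (single_patch a)" by (simp add: dom_single)
    from subst_apply[OF sub this True] show ?thesis by (simp add: D_zero single_patch_def)
  next
    case False
    then have "x \<notin> dom (S0 a)" using S0_patch[OF assms] by (simp add: patches_on_def)
    moreover have "\<not> (\<exists>\<eta>\<in>dom (single_patch a). x \<in> supertile \<eta>)"
      using False by (simp add: dom_single supertile_zero)
    ultimately show ?thesis using subst_outside[OF sub] by (simp add: domIff)
  qed
qed

lemma act_patches:
  assumes "\<gamma> \<in> \<Gamma>" "P \<in> patches A \<Gamma>"
  shows "act \<gamma> P \<in> patches A \<Gamma>"
proof -
  have "dom (act \<gamma> P) \<subseteq> \<Gamma>" using assms by (auto simp: dom_act patches_def intro: lattice_add)
  moreover have "ran (act \<gamma> P) \<subseteq> ran P" by (auto simp: act_def ran_def)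
  ultimately show ?thesis using assms(2) by (auto simp: patches_def)
qed

lemma subst_act_add:
  assumes "\<gamma> \<in> \<Gamma>" "P \<in> patches A \<Gamma>"
  shows "subst (act \<gamma> P) (D \<gamma> + y) = subst P y"
proof -
  have dom_P: "dom P \<subseteq> \<Gamma>" and dom_act_P: "dom (act \<gamma> P) \<subseteq> \<Gamma>"
    using assms act_patches by (auto simp: patches_def)
  show ?thesis
  proof (cases "\<exists>\<eta>\<in>dom P. y \<in> supertile \<eta>")
    case True
    then obtain \<eta> \<delta> where h: "\<eta> \<in> dom P" "\<delta> \<in> D ` V \<inter> \<Gamma>" "y = D \<eta> + \<delta>"
      by (auto simp: supertile_def)
    have "D \<gamma> + y = D (\<gamma> + \<eta>) + \<delta>" using h(3) by (simp add: D_add add.assoc)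
    moreover have "\<gamma> + \<eta> \<in> dom (act \<gamma> P)" using h(1) by (simp add: dom_act)
    ultimately show ?thesis
      using subst_apply[OF dom_act_P _ h(2)] subst_apply[OF dom_P h(1,2)] h(3) by simp
  next
    case False
    then have "\<not> (\<exists>\<eta>\<in>dom (act \<gamma> P). D \<gamma> + y \<in> supertile \<eta>)"
      by (auto simp: dom_act supertile_add)
    then show ?thesis using False subst_outside dom_P dom_act_P by metis
  qed
qed

lemma subst_act:
  assumes "\<gamma> \<in> \<Gamma>" "P \<in> patches A \<Gamma>"
  shows "subst (act \<gamma> P) = act (D \<gamma>) (subst P)"
proof
  fix x
  have "subst (act \<gamma> P) x = subst (act \<gamma> P) (D \<gamma> + (- D \<gamma> + x))"
    by (simp add: add.assoc[symmetric])
  also have "\<dots> = subst P (- D \<gamma> + x)" by (rule subst_act_add[OF assms])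
  finally show "subst (act \<gamma> P) x = act (D \<gamma>) (subst P) x" by (simp add: act_def)
qed

lemma subst_restrict:
  assumes "P \<in> patches A \<Gamma>" "x \<in> dom (subst (P |` M))"
  shows "subst P x = subst (P |` M) x"
proof -
  have restr: "P |` M \<in> patches A \<Gamma>" using assms(1) by (rule patches_restrict_map)
  obtain \<eta> \<delta> where h: "\<eta> \<in> dom (P |` M)" "\<delta> \<in> D ` V \<inter> \<Gamma>" "x = D \<eta> + \<delta>"
    using assms(2) by (auto simp: dom_subst[OF restr] supertile_def)
  have "dom (P |` M) \<subseteq> \<Gamma>" "dom P \<subseteq> \<Gamma>" using assms(1) restr by (auto simp: patches_def)
  with h show ?thesis using subst_apply[of "P |` M"] subst_apply[of P] by auto
qed

lemma dom_subst_Union: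
  assumes "\<forall>M\<in>Ms. M \<subseteq> \<Gamma>" "P \<in> patches_on A (\<Union>Ms)"
  shows "dom (subst P) = (\<Union>M\<in>Ms. dom (subst (P |` M)))"
proof -
  have "P \<in> patches A \<Gamma>" using assms by (auto simp: patches_on_def patches_def)
  then have "P \<in> patches A \<Gamma>" "P |` M \<in> patches A \<Gamma>" for M by (simp_all add: patches_restrict_map)
  then show ?thesis using assms(2) by (auto simp: dom_subst patches_on_def)
qed

lemma subst_patches_on_lattice:
  assumes "P \<in> patches_on A \<Gamma>" shows "subst P \<in> patches_on A \<Gamma>"
proof -
  have P: "P \<in> patches A \<Gamma>" and dom_P: "dom P = \<Gamma>"
    using assms by (simp_all add: patches_on_def patches_def)
  have "dom (subst P) = \<Gamma>"
    using supertile_subset supertile_cover by (auto simp: dom_subst[OF P] dom_P)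
  with subst_patches[OF P] show ?thesis by (simp add: patches_on_def patches_def)
qed

lemma continuous_subst:
  "continuous_map (config_topology A \<Gamma>) (config_topology A \<Gamma>) (pts_of \<Gamma> \<circ> subst \<circ> cfg_of \<Gamma>)"
  unfolding config_topology_def continuous_map_componentwise
proof (intro conjI ballI)
  show "(pts_of \<Gamma> \<circ> subst \<circ> cfg_of \<Gamma>) ` topspace (product_topology (\<lambda>_. discrete_topology A) \<Gamma>)
      \<subseteq> extensional \<Gamma>"
    by (auto simp: pts_of_def)
  fix k assume k: "k \<in> \<Gamma>"
  obtain \<eta> \<delta> where h: "\<eta> \<in> \<Gamma>" "\<delta> \<in> D ` V \<inter> \<Gamma>" "k = D \<eta> + \<delta>"
    using supertile_cover[OF k] by (auto simp: supertile_def)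
  have letter: "continuous_map (discrete_topology A) (discrete_topology A) (\<lambda>a. the (S0 a \<delta>))"
  proof -
    have "the (S0 a \<delta>) \<in> A" if "a \<in> A" for a
    proof -
      have "\<delta> \<in> dom (S0 a)" "ran (S0 a) \<subseteq> A"
        using S0_patch[OF that] h(2) by (simp_all add: patches_on_def)
      then show ?thesis by (auto intro: ranI)
    qed
    then show ?thesis by (simp add: continuous_map_from_discrete_topology Pi_iff)
  qed
  have "continuous_map (product_topology (\<lambda>_. discrete_topology A) \<Gamma>) (discrete_topology A)
      (\<lambda>x. the (S0 (x \<eta>) \<delta>))"
    using continuous_map_compose[OF continuous_map_product_projection[OF h(1)] letter]
    by (simp add: comp_def)
  moreover have "the (S0 (x \<eta>) \<delta>) = (pts_of \<Gamma> \<circ> subst \<circ> cfg_of \<Gamma>) x k" for x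
  proof -
    have "dom (cfg_of \<Gamma> x) \<subseteq> \<Gamma>" "\<eta> \<in> dom (cfg_of \<Gamma> x)"
      using h(1) by (auto simp: cfg_of_def split: if_splits)
    from subst_apply[OF this h(2)] show ?thesis
      using h k by (simp add: pts_of_def cfg_of_def)
  qed
  ultimately show "continuous_map (product_topology (\<lambda>_. discrete_topology A) \<Gamma>) (discrete_topology A)
      (\<lambda>x. (pts_of \<Gamma> \<circ> subst \<circ> cfg_of \<Gamma>) x k)"
    by simp
qed

end

lemma subst_propsD:
  assumes "subst_props D \<Gamma> A l0 S0 S"
  shows "P \<in> patches A \<Gamma> \<Longrightarrow> S P \<in> patches A \<Gamma>"
    and "a \<in> A \<Longrightarrow> S (single_patch a) = S0 a"
    and "\<gamma> \<in> \<Gamma> \<Longrightarrow> P \<in> patches A \<Gamma> \<Longrightarrow> S (act \<gamma> P) = act (D l0 \<gamma>) (S P)"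
    and "\<forall>M\<in>Ms. M \<subseteq> \<Gamma> \<Longrightarrow> P \<in> patches_on A (\<Union>Ms) \<Longrightarrow>
      dom (S P) = (\<Union>M\<in>Ms. dom (S (P |` M)))"
    and "\<forall>M\<in>Ms. M \<subseteq> \<Gamma> \<Longrightarrow> P \<in> patches_on A (\<Union>Ms) \<Longrightarrow> M \<in> Ms \<Longrightarrow>
      x \<in> dom (S (P |` M)) \<Longrightarrow> S P x = S (P |` M) x"
  using assms unfolding subst_props_def by simp_all

lemma subst_props_substitution_rule:
  fixes D :: "real \<Rightarrow> 'g::{metric_space,group_add} \<Rightarrow> 'g"
  assumes "substitution_rule (D l) \<Gamma> V A S0"
  shows "subst_props D \<Gamma> A l S0 (substitution_rule.subst (D l) \<Gamma> V S0)"
proof -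
  interpret substitution_rule "D l" \<Gamma> V A S0 by (fact assms)
  show ?thesis unfolding subst_props_def
  proof (intro conjI ballI allI impI)
    show "subst P \<in> patches A \<Gamma>" if "P \<in> patches A \<Gamma>" for P
      using that by (rule subst_patches)
    show "subst (single_patch a) = S0 a" if "a \<in> A" for a
      using that by (rule subst_single_patch)
    show "subst (act \<gamma> P) = act (D l \<gamma>) (subst P)" if "\<gamma> \<in> \<Gamma>" "P \<in> patches A \<Gamma>" for \<gamma> P
      using that by (rule subst_act)
    then show "dom (subst (act \<gamma> P)) = (+) (D l \<gamma>) ` dom (subst P)"
      if "\<gamma> \<in> \<Gamma>" "P \<in> patches A \<Gamma>" for \<gamma> P
      using that by (simp add: dom_act)
    show "dom (subst P) = (\<Union>M\<in>Ms. dom (subst (P |` M)))"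
      if "\<forall>M\<in>Ms. M \<subseteq> \<Gamma>" "P \<in> patches_on A (\<Union>Ms)" for Ms P
      using that by (rule dom_subst_Union)
    show "subst P \<gamma> = subst (P |` M) \<gamma>"
      if "\<forall>M\<in>Ms. M \<subseteq> \<Gamma>" "P \<in> patches_on A (\<Union>Ms)" "M \<in> Ms" "\<gamma> \<in> dom (subst (P |` M))"
      for Ms P M \<gamma>
    proof -
      have "\<Union>Ms \<subseteq> \<Gamma>" using that(1) by blast
      with that(2,4) show ?thesis by (intro subst_restrict patches_on_imp_patches)
    qed
  qed
qed

lemma subst_props_unique:
  assumes "0 \<in> \<Gamma>" "subst_props D \<Gamma> A l0 S0 S1" "subst_props D \<Gamma> A l0 S0 S2"
    and P: "P \<in> patches A \<Gamma>"
  shows "S1 P = S2 P"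
proof -
  have dom_P: "dom P \<subseteq> \<Gamma>" using P by (simp add: patches_def)
  define Ms where "Ms = (\<lambda>\<eta>. {\<eta>}) ` dom P"
  have Ms: "\<forall>M\<in>Ms. M \<subseteq> \<Gamma>" and P_Ms: "P \<in> patches_on A (\<Union>Ms)"
    using P dom_P by (auto simp: Ms_def patches_def patches_on_def)
  have single: "S1 (P |` M) = S2 (P |` M)" if "M \<in> Ms" for M
  proof -
    from that obtain \<eta> where \<eta>: "M = {\<eta>}" "\<eta> \<in> dom P" by (auto simp: Ms_def)
    then obtain a where a: "P \<eta> = Some a" by auto
    then have "a \<in> A" using P by (auto simp: patches_def ran_def)
    then have sp: "single_patch a \<in> patches A \<Gamma>"
      using assms(1) by (simp add: patches_def single_patch_def)
    have "P |` M = [\<eta> \<mapsto> a]" using \<eta>(1) a by (auto simp: restrict_map_def)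
    also have "\<dots> = act \<eta> (single_patch a)" by (simp add: act_single_patch)
    finally have "P |` M = act \<eta> (single_patch a)" .
    moreover have "\<eta> \<in> \<Gamma>" using \<eta>(2) dom_P by auto
    ultimately show ?thesis
      using sp \<open>a \<in> A\<close> subst_propsD(2,3)[OF assms(2)] subst_propsD(2,3)[OF assms(3)] by simp
  qed
  have dom_eq: "dom (S1 P) = dom (S2 P)"
    using single subst_propsD(4)[OF assms(2) Ms P_Ms] subst_propsD(4)[OF assms(3) Ms P_Ms] by simp
  show ?thesis
  proof
    fix x
    show "S1 P x = S2 P x"
    proof (cases "x \<in> dom (S1 P)")
      case True
      then obtain M where M: "M \<in> Ms" "x \<in> dom (S1 (P |` M))"
        using subst_propsD(4)[OF assms(2) Ms P_Ms] by auto
      have "S1 P x = S1 (P |` M) x" using M by (rule subst_propsD(5)[OF assms(2) Ms P_Ms])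
      also have "\<dots> = S2 (P |` M) x" using single[OF M(1)] by simp
      also have "\<dots> = S2 P x"
        using M single[OF M(1)] subst_propsD(5)[OF assms(3) Ms P_Ms] by simp
      finally show ?thesis .
    next
      case False
      with dom_eq show ?thesis by (metis domIff)
    qed
  qed
qed

lemma subst_props_funpow_act:
  assumes "subst_props D \<Gamma> A l0 S0 S" "D l0 ` \<Gamma> \<subseteq> \<Gamma>" "P \<in> patches A \<Gamma>" "\<gamma> \<in> \<Gamma>"
  shows "(S ^^ n) (act \<gamma> P) = act ((D l0 ^^ n) \<gamma>) ((S ^^ n) P)"
proof -
  have "(S ^^ n) P \<in> patches A \<Gamma>" for n
    by (induction n) (simp_all add: assms(3) subst_propsD(1)[OF assms(1)])
  moreover have "(D l0 ^^ n) \<gamma> \<in> \<Gamma>" for n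
    using assms(2,4) by (induction n) auto
  ultimately show ?thesis
    by (induction n) (simp_all add: subst_propsD(3)[OF assms(1)])
qed

lemma substitution_datum_imp_substitution_rule:
  assumes "substitution_datum D \<Gamma> V A l0 S0"
  shows "substitution_rule (D l0) \<Gamma> V A S0"
proof -
  have dilation: "dilation_datum D \<Gamma> V" and S0: "\<forall>a\<in>A. S0 a \<in> patches_on A (D l0 ` V \<inter> \<Gamma>)"
    and D_lattice: "D l0 ` \<Gamma> \<subseteq> \<Gamma>"
    using assms by (simp_all add: substitution_datum_def)
  obtain rm rp where "0 < rm" "rm < rp" "l0 > 1 + rp / rm"
    using assms by (auto simp: substitution_datum_def)
  moreover have "rp / rm > 0" using calculation by simp
  ultimately have "l0 > 0" by linarith
  with dilation have "bij (D l0)" "\<And>x y. D l0 (x + y) = D l0 x + D l0 y"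
    by (simp_all add: dilation_datum_def)
  moreover have "uniform_lattice \<Gamma>" "\<And>g. \<exists>!\<gamma>. \<gamma> \<in> \<Gamma> \<and> g \<in> (+) \<gamma> ` V"
    using dilation by (simp_all add: dilation_datum_def)
  ultimately show ?thesis
    using S0 D_lattice by unfold_locales (simp_all add: uniform_lattice_def)
qed

theorem proposition2:
  fixes D :: "real \<Rightarrow> 'g::{metric_space,group_add} \<Rightarrow> 'g"
    and \<Gamma> V :: "'g set"
    and A :: "'a set" and l0 :: real
    and S0 :: "'a \<Rightarrow> 'g \<Rightarrow> 'a option"
  assumes "substitution_datum D \<Gamma> V A l0 S0"
  shows "\<exists>S. subst_props D \<Gamma> A l0 S0 S
           \<and> (\<forall>S'. subst_props D \<Gamma> A l0 S0 S' \<longrightarrow> (\<forall>P\<in>patches A \<Gamma>. S' P = S P))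
           \<and> (\<forall>P\<in>patches A \<Gamma>. S P = construction D \<Gamma> V l0 S0 P)
           \<and> (\<forall>P\<in>patches A \<Gamma>. \<forall>\<gamma>\<in>\<Gamma>. \<forall>n::nat.
                (S ^^ n) (act \<gamma> P) = act ((D l0 ^^ n) \<gamma>) ((S ^^ n) P))
           \<and> (\<forall>P\<in>patches_on A \<Gamma>. S P \<in> patches_on A \<Gamma>)
           \<and> continuous_map (config_topology A \<Gamma>) (config_topology A \<Gamma>)
               (pts_of \<Gamma> \<circ> S \<circ> cfg_of \<Gamma>)"
proof -
  note rule = substitution_datum_imp_substitution_rule[OF assms]
  interpret substitution_rule "D l0" \<Gamma> V A S0 by (fact rule)
  note props = subst_props_substitution_rule[where D = D and l = l0, OF rule]
  have construction: "construction D \<Gamma> V l0 S0 = subst"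
    by (simp add: fun_eq_iff construction_def subst_def)
  show ?thesis
  proof (intro exI[of _ subst] conjI ballI allI impI)
    show "subst_props D \<Gamma> A l0 S0 subst" by (fact props)
    show "S' P = subst P" if "subst_props D \<Gamma> A l0 S0 S'" "P \<in> patches A \<Gamma>" for S' P
      using lattice_zero that(1) props that(2) by (rule subst_props_unique)
    show "subst P = construction D \<Gamma> V l0 S0 P" for P by (simp add: construction)
    show "(subst ^^ n) (act \<gamma> P) = act ((D l0 ^^ n) \<gamma>) ((subst ^^ n) P)"
      if "P \<in> patches A \<Gamma>" "\<gamma> \<in> \<Gamma>" for P \<gamma> n
      using props D_lattice that by (rule subst_props_funpow_act)
    show "subst P \<in> patches_on A \<Gamma>" if "P \<in> patches_on A \<Gamma>" for P
      using that by (rule subst_patches_on_lattice)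
    show "continuous_map (config_topology A \<Gamma>) (config_topology A \<Gamma>) (pts_of \<Gamma> \<circ> subst \<circ> cfg_of \<Gamma>)"
      by (rule continuous_subst)
  qed
qed

end
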